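(* Let $0<k_1<\dots<k_s<n$ and $\ell=(\ell_1,\dots,\ell_s)\in\mathbb{Z}^s$. For every $i\in\{1,\dots,s\}$ and $j\in\{1,\dots,k_i\}$, writing $D^i_c=\tau^{q^i_c\partial_{q^i_c}}$ and $D^{s+1}_c:=\Lambda_c$ (a constant), $$\prod_{c\ne j}\Bigl(1-\tau\lambda\frac{D^i_c}{D^i_j}\Bigr)\prod_{c=1}^{k_{i+1}}\Bigl(1-\frac{D^i_j}{D^{i+1}_c}\Bigr)\widehat{\mathbf I}^\ell_{Ab} =q^i_j\,(D^i_j)^{\ell_i}\prod_{c=1}^{k_{i-1}}\Bigl(1-\frac{D^{i-1}_c}{D^i_j}\Bigr)\prod_{c\ne j}\Bigl(1-\tau\lambda\frac{D^i_j}{D^i_c}\Bigr)\widehat{\mathbf I}^\ell_{Ab},$$ where $k_0=0$ (empty product) and $k_{s+1}=n$.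
   Context: Partial flag manifold $Fl=Fl(k_1,\dots,k_s;n)$, $T=(\mathbb{C}^* )^n$, $K_T(\mathrm{pt})=\mathbb{Z}[\Lambda_1^{\pm1},\dots,\Lambda_n^{\pm1}]$. Its abelianization $Ab(Fl)$ is a tower of products of projective bundles whose $K$-ring is $K_T(\mathrm{pt})[(P^i_a)^{\pm1}:1\le i\le s,1\le a\le k_i]$ modulo the relations $\prod_{b=1}^{k_{i+1}}(1-P^i_a/P^{i+1}_b)=0$ for all $i,a$, with the convention $P^{s+1}_b=\Lambda_b$ and $k_{s+1}=n$; the $P^i_a$ are the line bundles whose classical abelian/non-abelian image gives the $K$-theoretic Chern roots of the tautological subbundle $\mathcal S_i$. Formal variables: $q^i_a$, $\tau$, $\lambda$; $\tau^{q^i_a\partial_{q^i_a}}$ sends $q^i_a\mapsto\tau q^i_a$. For $m\in\mathbb{Z}$, $\widehat{\prod}_{l=1}^m f(l)=\prod_{l=1}^mf(l)$ if $m\ge0$ and $1/\prod_{l=m+1}^0f(l)$ if $m<0$. Define, summing over $d=(d^i_a)$ with all $d^i_a\in\mathbb{Z}_{\ge0}$, $$\widehat I^\ell_{Ab}=(1-\tau)\sum_{d}\prod_{i,a}(q^i_a)^{d^i_a}(P^i_a)^{\ell_id^i_a}\tau^{\ell_i\binom{d^i_a}{2}}\cdot\frac{\prod_{i=1}^s\prod_{a\ne b\le k_i}\widehat\prod_{l=1}^{d^i_a-d^i_b}\bigl(1-\lambda\frac{P^i_a}{P^i_b}\tau^l\bigr)}{\prod_{i=1}^{s-1}\prod_{a\le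 k_i,b\le k_{i+1}}\widehat\prod_{l=1}^{d^i_a-d^{i+1}_b}\bigl(1-\frac{P^i_a}{P^{i+1}_b}\tau^l\bigr)\cdot\prod_{a\le k_s,b\le n}\prod_{l=1}^{d^s_a}\bigl(1-\frac{P^s_a}{\Lambda_b}\tau^l\bigr)},$$ and $\widehat{\mathbf I}^\ell_{Ab}=\prod_{i,a}(P^i_a)^{\log(q^i_a)/\log\tau}\widehat I^\ell_{Ab}$, where the prefactor satisfies $\tau^{q^i_a\partial_{q^i_a}}(\prod P^{\log q/\log\tau}f)=\prod P^{\log q/\log\tau}\,P^i_a\tau^{q^i_a\partial_{q^i_a}}f$. *)

theory Defs
  imports Main
begin

text \<open>Coefficient ring: an arbitrary commutative ring in which the generators of
  K_T(Ab(Fl)) (tensored with the formal variables tau, lambda) live and satisfy the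
  defining relations; the needed denominators are assumed to be units.\<close>

definition rinv :: "'a::comm_ring_1 \<Rightarrow> 'a" where
  "rinv x = (THE y. x * y = 1)"

definition zpow :: "'a::comm_ring_1 \<Rightarrow> int \<Rightarrow> 'a" where
  "zpow x m = (if 0 \<le> m then x ^ nat m else rinv x ^ nat (- m))"

definition hprod :: "(int \<Rightarrow> 'a::comm_ring_1) \<Rightarrow> int \<Rightarrow> 'a" where
  "hprod f m = (if 0 \<le> m then (\<Prod>l\<in>{1..m}. f l) else rinv (\<Prod>l\<in>{m+1..0}. f l))"

definition hprod_recip :: "(int \<Rightarrow> 'a::comm_ring_1) \<Rightarrow> int \<Rightarrow> 'a" where
  "hprod_recip f m = (if 0 \<le> m then rinv (\<Prod>l\<in>{1..m}. f l) else (\<Prod>l\<in>{m+1..0}. f l))"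

definition kext :: "(nat \<Rightarrow> nat) \<Rightarrow> nat \<Rightarrow> nat \<Rightarrow> nat \<Rightarrow> nat" where
  "kext k s n i = (if i = 0 then 0 else if i = Suc s then n else k i)"

definition Pext :: "(nat \<Rightarrow> nat \<Rightarrow> 'a) \<Rightarrow> (nat \<Rightarrow> 'a) \<Rightarrow> nat \<Rightarrow> nat \<Rightarrow> nat \<Rightarrow> 'a" where
  "Pext P Lam s i b = (if i = Suc s then Lam b else P i b)"

text \<open>Formal power series in the variables q^i_a (1 \<le> i \<le> s, 1 \<le> a \<le> k_i):
  a series is the function  d \<mapsto> coefficient of  prod q^{d^i_a}.\<close>
type_synonym 'a qser = "(nat \<Rightarrow> nat \<Rightarrow> nat) \<Rightarrow> 'a"

definition valid_exp :: "nat \<Rightarrow> (nat \<Rightarrow> nat) \<Rightarrow> (nat \<Rightarrow> nat \<Rightarrow> nat) \<Rightarrow> bool" where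
  "valid_exp s k d = (\<forall>i a. d i a \<noteq> 0 \<longrightarrow> 1 \<le> i \<and> i \<le> s \<and> 1 \<le> a \<and> a \<le> k i)"

definition Ihat :: "nat \<Rightarrow> (nat \<Rightarrow> nat) \<Rightarrow> nat \<Rightarrow> (nat \<Rightarrow> int) \<Rightarrow> (nat \<Rightarrow> nat \<Rightarrow> 'a::comm_ring_1)
    \<Rightarrow> (nat \<Rightarrow> 'a) \<Rightarrow> 'a \<Rightarrow> 'a \<Rightarrow> 'a qser" where
  "Ihat s k n ell P Lam tau lam d =
    (if valid_exp s k d then
      (1 - tau)
      * (\<Prod>i\<in>{1..s}. \<Prod>a\<in>{1..k i}.
           zpow (P i a) (ell i * int (d i a)) * zpow tau (ell i * int (d i a choose 2)))
      * (\<Prod>i\<in>{1..s}. \<Prod>a\<in>{1..k i}. \<Prod>b\<in>{1..k i} - {a}.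
           hprod (\<lambda>l. 1 - lam * P i a * rinv (P i b) * zpow tau l) (int (d i a) - int (d i b)))
      * (\<Prod>i\<in>{1..<s}. \<Prod>a\<in>{1..k i}. \<Prod>b\<in>{1..k (Suc i)}.
           hprod_recip (\<lambda>l. 1 - P i a * rinv (P (Suc i) b) * zpow tau l)
             (int (d i a) - int (d (Suc i) b)))
      * (\<Prod>a\<in>{1..k s}. \<Prod>b\<in>{1..n}.
           rinv (\<Prod>l\<in>{1..d s a}. 1 - P s a * rinv (Lam b) * tau ^ l))
     else 0)"

definition smul :: "'a::comm_ring_1 \<Rightarrow> 'a qser \<Rightarrow> 'a qser" where
  "smul x f = (\<lambda>d. x * f d)"

definition ssub :: "'a::comm_ring_1 qser \<Rightarrow> 'a qser \<Rightarrow> 'a qser" where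
  "ssub f g = (\<lambda>d. f d - g d)"

text \<open>tau^{q^i_c d/dq^i_c} and its inverse\<close>
definition tshift :: "'a::comm_ring_1 \<Rightarrow> nat \<Rightarrow> nat \<Rightarrow> 'a qser \<Rightarrow> 'a qser" where
  "tshift tau i c f = (\<lambda>d. tau ^ d i c * f d)"

definition tshift_inv :: "'a::comm_ring_1 \<Rightarrow> nat \<Rightarrow> nat \<Rightarrow> 'a qser \<Rightarrow> 'a qser" where
  "tshift_inv tau i c f = (\<lambda>d. rinv tau ^ d i c * f d)"

definition mulq :: "nat \<Rightarrow> nat \<Rightarrow> 'a::comm_ring_1 qser \<Rightarrow> 'a qser" where
  "mulq i j f = (\<lambda>d. if 1 \<le> d i j then f (d(i := (d i)(j := d i j - 1))) else 0)"

text \<open>D^i_c acting on bold-hat-I = prod (P^i_a)^{log q^i_a / log tau} * hat-I, transported to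
  the factor hat-I via the commutation rule of the prefactor:
  tau^{q d/dq}(prefactor * f) = prefactor * P^i_c * tau^{q d/dq} f.\<close>
definition Dop :: "nat \<Rightarrow> (nat \<Rightarrow> nat \<Rightarrow> 'a::comm_ring_1) \<Rightarrow> (nat \<Rightarrow> 'a) \<Rightarrow> 'a
    \<Rightarrow> nat \<Rightarrow> nat \<Rightarrow> 'a qser \<Rightarrow> 'a qser" where
  "Dop s P Lam tau i c f =
     (if i = Suc s then smul (Lam c) f else smul (P i c) (tshift tau i c f))"

definition Dop_inv :: "nat \<Rightarrow> (nat \<Rightarrow> nat \<Rightarrow> 'a::comm_ring_1) \<Rightarrow> (nat \<Rightarrow> 'a) \<Rightarrow> 'a
    \<Rightarrow> nat \<Rightarrow> nat \<Rightarrow> 'a qser \<Rightarrow> 'a qser" where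
  "Dop_inv s P Lam tau i c f =
     (if i = Suc s then smul (rinv (Lam c)) f else smul (rinv (P i c)) (tshift_inv tau i c f))"

definition Dop_pow :: "nat \<Rightarrow> (nat \<Rightarrow> nat \<Rightarrow> 'a::comm_ring_1) \<Rightarrow> (nat \<Rightarrow> 'a) \<Rightarrow> 'a
    \<Rightarrow> nat \<Rightarrow> nat \<Rightarrow> int \<Rightarrow> 'a qser \<Rightarrow> 'a qser" where
  "Dop_pow s P Lam tau i c m =
     (if 0 \<le> m then Dop s P Lam tau i c ^^ nat m else Dop_inv s P Lam tau i c ^^ nat (- m))"

definition one_minus_ratio :: "nat \<Rightarrow> (nat \<Rightarrow> nat \<Rightarrow> 'a::comm_ring_1) \<Rightarrow> (nat \<Rightarrow> 'a) \<Rightarrow> 'a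
    \<Rightarrow> 'a \<Rightarrow> nat \<Rightarrow> nat \<Rightarrow> nat \<Rightarrow> nat \<Rightarrow> 'a qser \<Rightarrow> 'a qser" where
  "one_minus_ratio s P Lam tau x i a i' b f =
     ssub f (smul x (Dop s P Lam tau i a (Dop_inv s P Lam tau i' b f)))"

definition op_prod :: "nat set \<Rightarrow> (nat \<Rightarrow> 'b \<Rightarrow> 'b) \<Rightarrow> 'b \<Rightarrow> 'b" where
  "op_prod A F = foldr (\<lambda>c g. F c \<circ> g) (sorted_list_of_set A) id"

end

theory Submission
  imports Defs
begin

text \<open>Every operator in the identity except multiplication by \<open>q\<^sup>i\<^sub>j\<close> acts on the coefficient
  of \<open>q\<^sup>d\<close> as multiplication by a scalar, so the identity is one between coefficients: at
  exponents with \<open>d\<^sup>i\<^sub>j = 0\<close> the left-hand side must vanish, and otherwise it relates the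
  coefficient of \<open>Ihat\<close> at \<open>d\<close> to the one at \<open>d - e\<^sub>i\<^sub>j\<close>. That coefficient is a product of
  hatted products whose integrands, evaluated at the current exponent differences, are exactly
  the factors of these scalars. Raising \<open>d\<^sup>i\<^sub>j\<close> by one lengthens or shortens each affected hatted
  product by one factor, and these factors assemble into the scalars of the two sides, the
  twist factor supplying the power of \<open>D\<^sup>i\<^sub>j\<close>. When \<open>d\<^sup>i\<^sub>j = 0\<close>, the hatted products of row \<open>j\<close> towards
  level \<open>i + 1\<close>, completed by the scalar on the left, all contain their factor at \<open>l = 0\<close>, namely
  \<open>1 - P\<^sup>i\<^sub>j / P\<^sup>i\<^sup>+\<^sup>1\<^sub>b\<close>, and the product of these over \<open>b\<close> vanishes by the defining relation.\<close>

lemma rinv_eq: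
  fixes x :: "'a::comm_ring_1"
  assumes "x * y = 1"
  shows "rinv x = y"
  unfolding rinv_def
proof (rule the_equality)
  fix z assume "x * z = 1"
  then have "z = z * (x * y)" and "y = y * (x * z)" using assms by simp_all
  then show "z = y" by (simp add: ac_simps)
qed (rule assms)

lemma rinv_right_inverse:
  fixes x :: "'a::comm_ring_1"
  assumes "x dvd 1"
  shows "x * rinv x = 1"
  using assms rinv_eq by (metis dvdE)

lemma rinv_left_inverse:
  fixes x :: "'a::comm_ring_1"
  shows "x dvd 1 \<Longrightarrow> rinv x * x = 1"
  using rinv_right_inverse by (metis mult.commute)

lemma rinv_1 [simp]: "rinv (1::'a::comm_ring_1) = 1"
  by (rule rinv_eq) simp

lemma rinv_mult:
  fixes x y :: "'a::comm_ring_1"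
  assumes "x dvd 1" "y dvd 1"
  shows "rinv (x * y) = rinv x * rinv y"
proof (rule rinv_eq)
  have "x * y * (rinv x * rinv y) = (x * rinv x) * (y * rinv y)" by (simp add: ac_simps)
  then show "x * y * (rinv x * rinv y) = 1" using assms by (simp add: rinv_right_inverse)
qed

lemma rinv_power:
  fixes x :: "'a::comm_ring_1"
  assumes "x dvd 1"
  shows "rinv (x ^ n) = rinv x ^ n"
  by (rule rinv_eq) (simp add: power_mult_distrib[symmetric] rinv_right_inverse[OF assms])

lemma zpow_of_nat [simp]: "zpow x (int n) = x ^ n"
  by (simp add: zpow_def)

lemma zpow_minus_of_nat: "zpow x (- int n) = rinv x ^ n"
  by (cases "n = 0") (simp_all add: zpow_def)

lemma zpow_one_plus:
  fixes x :: "'a::comm_ring_1"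
  assumes "x dvd 1"
  shows "zpow x (1 + m) = x * zpow x m"
proof (cases "0 \<le> m")
  case True
  then have "nat (1 + m) = Suc (nat m)" by simp
  with True show ?thesis by (simp add: zpow_def)
next
  case False
  define n where "n = nat (- m - 1)"
  with False have m: "m = - int (Suc n)" by simp
  have "zpow x (1 + m) = rinv x ^ n" "zpow x m = rinv x * rinv x ^ n"
    using m zpow_minus_of_nat[of x n] zpow_minus_of_nat[of x "Suc n"] by simp_all
  then show ?thesis
    using rinv_right_inverse[OF assms] by (simp add: mult.assoc[symmetric])
qed

lemma zpow_add:
  fixes x :: "'a::comm_ring_1"
  assumes "x dvd 1"
  shows "zpow x (a + b) = zpow x a * zpow x b"
proof (induction b rule: int_induct[where k = 0])
  case base
  then show ?case by (simp add: zpow_def)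
next
  case (step1 b)
  then show ?case using zpow_one_plus[OF assms, of "a + b"] zpow_one_plus[OF assms, of b]
    by (simp add: ac_simps)
next
  case (step2 b)
  have "x * zpow x (a + (b - 1)) = x * (zpow x a * zpow x (b - 1))"
    using step2 zpow_one_plus[OF assms, of "a + (b - 1)"] zpow_one_plus[OF assms, of "b - 1"]
    by (simp add: ac_simps)
  then show ?case using rinv_left_inverse[OF assms] by (metis mult.assoc mult_1)
qed

lemma zpow_diff_of_nat:
  fixes x :: "'a::comm_ring_1"
  assumes "x dvd 1"
  shows "zpow x (int a - int b) = x ^ a * rinv x ^ b"
  using zpow_add[OF assms, of "int a" "- int b"] by (simp add: zpow_minus_of_nat)

lemma zpow_mult_distrib:
  fixes x y :: "'a::comm_ring_1"
  assumes "x dvd 1" "y dvd 1"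
  shows "zpow (x * y) m = zpow x m * zpow y m"
  using rinv_mult[OF assms] by (simp add: zpow_def power_mult_distrib)

lemma zpow_power:
  fixes x :: "'a::comm_ring_1"
  assumes "x dvd 1"
  shows "zpow (x ^ n) m = zpow x (int n * m)"
proof (induction n)
  case (Suc n)
  have "zpow (x ^ Suc n) m = zpow x m * zpow (x ^ n) m"
    using zpow_mult_distrib[OF assms, of "x ^ n"] dvd_power_same[OF assms, of n] by simp
  then show ?case using Suc zpow_add[OF assms] by (simp add: algebra_simps)
qed (simp add: zpow_def)

lemma prod_dvd_one: "(\<And>x. x \<in> A \<Longrightarrow> f x dvd 1) \<Longrightarrow> prod f A dvd 1"
  using prod_dvd_prod[of A f "\<lambda>_. 1"] by simp

lemma prod_ratio_at:
  assumes "finite A" "x \<in> A" "\<And>y. y \<in> A \<Longrightarrow> y \<noteq> x \<Longrightarrow> f y = g y" "u * f x = v * g x"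
  shows "u * prod f A = v * (prod g A :: 'a::comm_monoid_mult)"
proof -
  have "prod f (A - {x}) = prod g (A - {x})" using assms(3) by (intro prod.cong) auto
  then show ?thesis using assms by (simp add: prod.remove mult.assoc[symmetric])
qed

lemma hprod_step:
  fixes f :: "int \<Rightarrow> 'a::comm_ring_1"
  assumes unit: "\<And>l. f l dvd 1"
  shows "hprod f m = hprod f (m - 1) * f m"
proof -
  consider "1 \<le> m" | "m = 0" | "m < 0" by linarith
  then show ?thesis
  proof cases
    case 1
    then have "{1..m} = insert m {1..m - 1}" by auto
    with 1 show ?thesis by (simp add: hprod_def mult.commute)
  next
    case 2
    then show ?thesis using rinv_left_inverse[OF unit] by (simp add: hprod_def)
  next
    case 3
    define p where "p = (\<Prod>l\<in>{m + 1..0}. f l)"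
    have "{m..0} = insert m {m + 1..0}" using 3 by auto
    then have "(\<Prod>l\<in>{m..0}. f l) = f m * p" by (simp add: p_def)
    moreover have "p dvd 1" unfolding p_def by (rule prod_dvd_one) (simp add: unit)
    ultimately have "hprod f (m - 1) * f m = rinv p * (rinv (f m) * f m)"
      using 3 rinv_mult[OF unit] by (simp add: hprod_def ac_simps)
    then show ?thesis using 3 rinv_left_inverse[OF unit] by (simp add: hprod_def p_def)
  qed
qed

lemma hprod_recip_step:
  fixes f :: "int \<Rightarrow> 'a::comm_ring_1"
  assumes unit: "\<And>l. 1 \<le> l \<Longrightarrow> f l dvd 1"
  shows "hprod_recip f (m - 1) = hprod_recip f m * f m"
proof -
  consider "1 \<le> m" | "m = 0" | "m < 0" by linarith
  then show ?thesis
  proof cases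
    case 1
    define p where "p = (\<Prod>l\<in>{1..m - 1}. f l)"
    have "{1..m} = insert m {1..m - 1}" using 1 by auto
    then have "(\<Prod>l\<in>{1..m}. f l) = f m * p" by (simp add: p_def)
    moreover have "p dvd 1" unfolding p_def by (rule prod_dvd_one) (simp add: unit)
    ultimately have "hprod_recip f m * f m = rinv p * (rinv (f m) * f m)"
      using 1 rinv_mult[OF unit[OF 1]] by (simp add: hprod_recip_def ac_simps)
    then show ?thesis using 1 rinv_left_inverse[OF unit[OF 1]] by (simp add: hprod_recip_def p_def)
  next
    case 2
    then show ?thesis by (simp add: hprod_recip_def)
  next
    case 3
    then have "{m..0} = insert m {m + 1..0}" by auto
    with 3 show ?thesis by (simp add: hprod_recip_def mult.commute)
  qed
qed

lemma hprod_recip_of_nat: "hprod_recip f (int m) = rinv (\<Prod>l\<in>{1..m}. f (int l))"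
proof -
  have "int ` {1..m} = {1..int m}" by (simp add: image_int_atLeastAtMost)
  then have "(\<Prod>l\<in>{1..int m}. f l) = (\<Prod>l\<in>{1..m}. f (int l))"
    by (metis inj_of_nat inj_on_subset prod.reindex subset_UNIV comp_apply prod.cong)
  then show ?thesis by (simp add: hprod_recip_def)
qed

lemma dvd_hprod_recip_neg: "m < 0 \<Longrightarrow> f 0 dvd hprod_recip f m"
  by (simp add: hprod_recip_def dvd_prodI)

section \<open>The operators as multipliers on coefficients\<close>

definition Dop_coeff :: "nat \<Rightarrow> (nat \<Rightarrow> nat \<Rightarrow> 'a::comm_ring_1) \<Rightarrow> (nat \<Rightarrow> 'a) \<Rightarrow> 'a
    \<Rightarrow> nat \<Rightarrow> nat \<Rightarrow> (nat \<Rightarrow> nat \<Rightarrow> nat) \<Rightarrow> 'a" where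
  "Dop_coeff s P Lam tau i c d = (if i = Suc s then Lam c else P i c * tau ^ d i c)"

definition Dop_inv_coeff :: "nat \<Rightarrow> (nat \<Rightarrow> nat \<Rightarrow> 'a::comm_ring_1) \<Rightarrow> (nat \<Rightarrow> 'a) \<Rightarrow> 'a
    \<Rightarrow> nat \<Rightarrow> nat \<Rightarrow> (nat \<Rightarrow> nat \<Rightarrow> nat) \<Rightarrow> 'a" where
  "Dop_inv_coeff s P Lam tau i c d = (if i = Suc s then rinv (Lam c) else rinv (P i c) * rinv tau ^ d i c)"

lemma Dop_eq: "Dop s P Lam tau i c f = (\<lambda>d. Dop_coeff s P Lam tau i c d * f d)"
  by (simp add: fun_eq_iff Dop_def Dop_coeff_def smul_def tshift_def ac_simps)

lemma Dop_inv_eq: "Dop_inv s P Lam tau i c f = (\<lambda>d. Dop_inv_coeff s P Lam tau i c d * f d)"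
  by (simp add: fun_eq_iff Dop_inv_def Dop_inv_coeff_def smul_def tshift_inv_def ac_simps)

lemma one_minus_ratio_eq:
  "one_minus_ratio s P Lam tau x i a i' b =
     (\<lambda>f d. (1 - x * Dop_coeff s P Lam tau i a d * Dop_inv_coeff s P Lam tau i' b d) * f d)"
  by (simp add: fun_eq_iff one_minus_ratio_def ssub_def smul_def Dop_eq Dop_inv_eq algebra_simps)

lemma Dop_pow_eq:
  assumes "i \<noteq> Suc s" "P i c dvd 1" "tau dvd 1"
  shows "Dop_pow s P Lam tau i c m f = (\<lambda>d. zpow (Dop_coeff s P Lam tau i c d) m * f d)"
proof -
  have "(Dop s P Lam tau i c ^^ l) f = (\<lambda>d. Dop_coeff s P Lam tau i c d ^ l * f d)"
    and "(Dop_inv s P Lam tau i c ^^ l) f = (\<lambda>d. Dop_inv_coeff s P Lam tau i c d ^ l * f d)" for l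
    by (induction l) (simp_all add: Dop_eq Dop_inv_eq ac_simps)
  moreover have "Dop_inv_coeff s P Lam tau i c d = rinv (Dop_coeff s P Lam tau i c d)" for d
    using assms rinv_mult[of "P i c" "tau ^ d i c"] rinv_power[of tau] dvd_power_same[of tau 1]
    by (simp add: Dop_coeff_def Dop_inv_coeff_def)
  ultimately show ?thesis by (simp add: Dop_pow_def zpow_def)
qed

lemma op_prod_mult:
  fixes g :: "nat \<Rightarrow> 'b \<Rightarrow> 'a::comm_ring_1"
  assumes "finite A"
  shows "op_prod A (\<lambda>c f d. g c d * f d) f = (\<lambda>d. (\<Prod>c\<in>A. g c d) * f d)"
proof -
  have "foldr (\<lambda>c h. (\<lambda>f d. g c d * f d) \<circ> h) cs id f = (\<lambda>d. (\<Prod>c\<leftarrow>cs. g c d) * f d)" for cs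
    by (induction cs) (simp_all add: fun_eq_iff mult.assoc)
  then show ?thesis
    using assms by (simp add: op_prod_def prod.distinct_set_conv_list[symmetric])
qed

lemma Dop_ratio:
  assumes "tau dvd 1" "i \<noteq> Suc s" "i' = Suc s \<Longrightarrow> d i' b = 0"
  shows "Dop_coeff s P Lam tau i a d * Dop_inv_coeff s P Lam tau i' b d
    = P i a * rinv (Pext P Lam s i' b) * zpow tau (int (d i a) - int (d i' b))"
  using assms by (simp add: Dop_coeff_def Dop_inv_coeff_def Pext_def zpow_diff_of_nat ac_simps)

section \<open>The coefficients of \<open>Ihat\<close>\<close>

definition inc_exp :: "nat \<Rightarrow> nat \<Rightarrow> (nat \<Rightarrow> nat \<Rightarrow> nat) \<Rightarrow> nat \<Rightarrow> nat \<Rightarrow> nat" where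
  "inc_exp i j e = e(i := (e i)(j := Suc (e i j)))"

lemma inc_exp_at [simp]: "inc_exp i j e i j = Suc (e i j)"
  and inc_exp_same_level [simp]: "a \<noteq> j \<Longrightarrow> inc_exp i j e i a = e i a"
  and inc_exp_other_level [simp]: "i' \<noteq> i \<Longrightarrow> inc_exp i j e i' = e i'"
  by (simp_all add: inc_exp_def)

lemma valid_exp_zero: "valid_exp s k d \<Longrightarrow> \<not> (1 \<le> i \<and> i \<le> s) \<Longrightarrow> d i a = 0"
  unfolding valid_exp_def by blast

locale abelian_Ihat =
  fixes s n :: nat and k :: "nat \<Rightarrow> nat" and ell :: "nat \<Rightarrow> int"
    and P :: "nat \<Rightarrow> nat \<Rightarrow> 'a::comm_ring_1" and Lam :: "nat \<Rightarrow> 'a" and tau lam :: 'a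
  assumes tau_unit: "tau dvd 1"
    and P_unit: "\<And>i a. i \<in> {1..s} \<Longrightarrow> a \<in> {1..k i} \<Longrightarrow> P i a dvd 1"
    and lam_unit: "\<And>i a b l. i \<in> {1..s} \<Longrightarrow> a \<in> {1..k i} \<Longrightarrow> b \<in> {1..k i} \<Longrightarrow> a \<noteq> b
      \<Longrightarrow> (1 - lam * P i a * rinv (P i b) * zpow tau l) dvd 1"
    and flag_unit: "\<And>i a b l. i \<in> {1..s} \<Longrightarrow> a \<in> {1..k i} \<Longrightarrow> b \<in> {1..kext k s n (Suc i)}
      \<Longrightarrow> 1 \<le> l \<Longrightarrow> (1 - P i a * rinv (Pext P Lam s (Suc i) b) * zpow tau l) dvd 1"
    and flag_relation: "\<And>i a. i \<in> {1..s} \<Longrightarrow> a \<in> {1..k i}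
      \<Longrightarrow> (\<Prod>b\<in>{1..kext k s n (Suc i)}. 1 - P i a * rinv (Pext P Lam s (Suc i) b)) = 0"
begin

definition lam_integrand :: "nat \<Rightarrow> nat \<Rightarrow> nat \<Rightarrow> int \<Rightarrow> 'a" where
  "lam_integrand i a b l = 1 - lam * P i a * rinv (P i b) * zpow tau l"

definition flag_integrand :: "nat \<Rightarrow> nat \<Rightarrow> nat \<Rightarrow> int \<Rightarrow> 'a" where
  "flag_integrand i a b l = 1 - P i a * rinv (Pext P Lam s (Suc i) b) * zpow tau l"

definition twist_factor :: "(nat \<Rightarrow> nat \<Rightarrow> nat) \<Rightarrow> 'a" where
  "twist_factor d = (\<Prod>i\<in>{1..s}. \<Prod>a\<in>{1..k i}.
     zpow (P i a) (ell i * int (d i a)) * zpow tau (ell i * int (d i a choose 2)))"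

definition lam_level :: "nat \<Rightarrow> (nat \<Rightarrow> nat \<Rightarrow> nat) \<Rightarrow> 'a" where
  "lam_level i d = (\<Prod>a\<in>{1..k i}. \<Prod>b\<in>{1..k i} - {a}.
     hprod (lam_integrand i a b) (int (d i a) - int (d i b)))"

definition lam_factor :: "(nat \<Rightarrow> nat \<Rightarrow> nat) \<Rightarrow> 'a" where
  "lam_factor d = (\<Prod>i\<in>{1..s}. lam_level i d)"

text \<open>The last two factors of the denominator of \<open>Ihat\<close> are merged into a single level \<open>s\<close>
  of \<open>flag_factor\<close>, with \<open>P\<^sup>s\<^sup>+\<^sup>1 = \<Lambda>\<close>; this is correct because \<open>d\<^sup>s\<^sup>+\<^sup>1 = 0\<close> for valid
  exponents.\<close>

definition flag_level :: "nat \<Rightarrow> (nat \<Rightarrow> nat \<Rightarrow> nat) \<Rightarrow> 'a" where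
  "flag_level i d = (\<Prod>a\<in>{1..k i}. \<Prod>b\<in>{1..kext k s n (Suc i)}.
     hprod_recip (flag_integrand i a b) (int (d i a) - int (d (Suc i) b)))"

definition flag_factor :: "(nat \<Rightarrow> nat \<Rightarrow> nat) \<Rightarrow> 'a" where
  "flag_factor d = (\<Prod>i\<in>{1..s}. flag_level i d)"

lemma Ihat_eq:
  "Ihat s k n ell P Lam tau lam d =
    (if valid_exp s k d then (1 - tau) * twist_factor d * lam_factor d * flag_factor d else 0)"
proof (cases "valid_exp s k d")
  case True
  then have top_zero: "d (Suc s) b = 0" for b by (simp add: valid_exp_zero)
  have "flag_level i d = (\<Prod>a\<in>{1..k i}. \<Prod>b\<in>{1..k (Suc i)}.
     hprod_recip (\<lambda>l. 1 - P i a * rinv (P (Suc i) b) * zpow tau l) (int (d i a) - int (d (Suc i) b)))"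
    if "i < s" for i
    using that by (simp add: flag_level_def kext_def Pext_def flag_integrand_def[abs_def])
  moreover have "flag_level s d = (\<Prod>a\<in>{1..k s}. \<Prod>b\<in>{1..n}.
     rinv (\<Prod>l\<in>{1..d s a}. 1 - P s a * rinv (Lam b) * tau ^ l))"
    by (simp add: flag_level_def kext_def Pext_def flag_integrand_def[abs_def] top_zero
        hprod_recip_of_nat)
  moreover have "flag_factor d = (\<Prod>i\<in>{1..<s}. flag_level i d) * flag_level s d"
  proof (cases "s = 0")
    case True
    then have "{1..s} = {}" "{1..<s} = {}" by auto
    moreover have "d s a = 0" for a using True \<open>valid_exp s k d\<close> by (simp add: valid_exp_zero)
    ultimately show ?thesis by (simp add: flag_factor_def flag_level_def top_zero hprod_recip_def)
  next
    case False
    then have "{1..s} = insert s {1..<s}" by auto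
    then show ?thesis by (simp add: flag_factor_def mult.commute)
  qed
  ultimately show ?thesis
    using True by (simp add: Ihat_def twist_factor_def lam_factor_def lam_level_def
        lam_integrand_def[abs_def] mult.assoc)
qed (simp add: Ihat_def)

lemma flag_integrand_unit:
  "i \<in> {1..s} \<Longrightarrow> a \<in> {1..k i} \<Longrightarrow> b \<in> {1..kext k s n (Suc i)} \<Longrightarrow> 1 \<le> l
    \<Longrightarrow> flag_integrand i a b l dvd 1"
  using flag_unit by (simp add: flag_integrand_def)

end

locale abelian_Ihat_entry = abelian_Ihat +
  fixes i j :: nat
  assumes i_range: "i \<in> {1..s}" and j_range: "j \<in> {1..k i}"
begin

definition lam_left :: "(nat \<Rightarrow> nat \<Rightarrow> nat) \<Rightarrow> 'a" where
  "lam_left d = (\<Prod>c\<in>{1..k i} - {j}.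
     1 - tau * lam * Dop_coeff s P Lam tau i c d * Dop_inv_coeff s P Lam tau i j d)"

definition lam_right :: "(nat \<Rightarrow> nat \<Rightarrow> nat) \<Rightarrow> 'a" where
  "lam_right d = (\<Prod>c\<in>{1..k i} - {j}.
     1 - tau * lam * Dop_coeff s P Lam tau i j d * Dop_inv_coeff s P Lam tau i c d)"

definition flag_left :: "(nat \<Rightarrow> nat \<Rightarrow> nat) \<Rightarrow> 'a" where
  "flag_left d = (\<Prod>c\<in>{1..kext k s n (Suc i)}.
     1 - Dop_coeff s P Lam tau i j d * Dop_inv_coeff s P Lam tau (Suc i) c d)"

definition flag_right :: "(nat \<Rightarrow> nat \<Rightarrow> nat) \<Rightarrow> 'a" where
  "flag_right d = (\<Prod>c\<in>{1..kext k s n (i - 1)}.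
     1 - Dop_coeff s P Lam tau (i - 1) c d * Dop_inv_coeff s P Lam tau i j d)"

lemma i_ne_Suc_s: "i \<noteq> Suc s" "i - 1 \<noteq> Suc s"
  using i_range by auto

lemma valid_exp_inc: "valid_exp s k (inc_exp i j e) = valid_exp s k e"
proof -
  have "(inc_exp i j e i' a \<noteq> 0 \<longrightarrow> 1 \<le> i' \<and> i' \<le> s \<and> 1 \<le> a \<and> a \<le> k i')
      = (e i' a \<noteq> 0 \<longrightarrow> 1 \<le> i' \<and> i' \<le> s \<and> 1 \<le> a \<and> a \<le> k i')" for i' a
    by (cases "i' = i"; cases "a = j") (use i_range j_range in auto)
  then show ?thesis unfolding valid_exp_def by simp
qed

lemma lam_left_eq:
  "lam_left d = (\<Prod>c\<in>{1..k i} - {j}. lam_integrand i c j (int (d i c) - int (d i j) + 1))"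
  using i_range i_ne_Suc_s tau_unit
  by (simp add: lam_left_def lam_integrand_def Dop_ratio Pext_def zpow_one_plus[OF tau_unit] ac_simps)

lemma lam_right_eq:
  "lam_right d = (\<Prod>c\<in>{1..k i} - {j}. lam_integrand i j c (int (d i j) - int (d i c) + 1))"
  using i_range i_ne_Suc_s tau_unit
  by (simp add: lam_right_def lam_integrand_def Dop_ratio Pext_def zpow_one_plus[OF tau_unit] ac_simps)

lemma flag_left_eq:
  "valid_exp s k d \<Longrightarrow> flag_left d
    = (\<Prod>c\<in>{1..kext k s n (Suc i)}. flag_integrand i j c (int (d i j) - int (d (Suc i) c)))"
  using i_range i_ne_Suc_s tau_unit
  by (simp add: flag_left_def flag_integrand_def Dop_ratio valid_exp_zero)

lemma flag_right_eq:
  "flag_right d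
    = (\<Prod>c\<in>{1..kext k s n (i - 1)}. flag_integrand (i - 1) c j (int (d (i - 1) c) - int (d i j)))"
  using i_range i_ne_Suc_s tau_unit
  by (simp add: flag_right_def flag_integrand_def Dop_coeff_def Dop_inv_coeff_def
      Pext_def zpow_diff_of_nat ac_simps)

lemma twist_factor_inc:
  "twist_factor (inc_exp i j e) = zpow (Dop_coeff s P Lam tau i j e) (ell i) * twist_factor e"
proof -
  define y where "y = e i j"
  have P_ij: "P i j dvd 1" using P_unit i_range j_range by blast
  have "zpow (Dop_coeff s P Lam tau i j e) (ell i) = zpow (P i j) (ell i) * zpow tau (int y * ell i)"
    using i_ne_Suc_s zpow_mult_distrib[OF P_ij dvd_power_same[OF tau_unit, of y, simplified]]
    by (simp add: Dop_coeff_def y_def zpow_power[OF tau_unit])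
  moreover have "zpow (P i j) (ell i * int (Suc y)) * zpow tau (ell i * int (Suc y choose 2))
      = zpow (P i j) (ell i) * zpow tau (int y * ell i)
        * (zpow (P i j) (ell i * int y) * zpow tau (ell i * int (y choose 2)))"
  proof -
    have "ell i * int (Suc y) = ell i + ell i * int y"
      and "ell i * int (Suc y choose 2) = int y * ell i + ell i * int (y choose 2)"
      by (simp_all add: numeral_2_eq_2 algebra_simps)
    then show ?thesis by (simp add: zpow_add[OF P_ij] zpow_add[OF tau_unit] ac_simps)
  qed
  ultimately have "1 * twist_factor (inc_exp i j e)
      = zpow (Dop_coeff s P Lam tau i j e) (ell i) * twist_factor e"
    unfolding twist_factor_def
    by (intro prod_ratio_at[where x = i] prod_ratio_at[where x = j])
      (use i_range j_range in \<open>simp_all add: y_def\<close>)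
  then show ?thesis by simp
qed

lemma lam_level_inc:
  "lam_left (inc_exp i j e) * lam_level i (inc_exp i j e) = lam_right e * lam_level i e"
proof -
  define d where "d = inc_exp i j e"
  define K where "K = {1..k i}"
  define H where "H a b x = hprod (lam_integrand i a b) (int (x i a) - int (x i b))" for a b x
  have unit: "lam_integrand i a b l dvd 1" if "a \<in> K" "b \<in> K" "a \<noteq> b" for a b l
    using lam_unit i_range that by (simp add: lam_integrand_def K_def)
  have jK: "finite K" "j \<in> K" using j_range by (simp_all add: K_def)
  have row: "(\<Prod>b\<in>K - {j}. H j b d) = (\<Prod>b\<in>K - {j}. H j b e) * lam_right e"
  proof -
    have "H j b d = H j b e * lam_integrand i j b (int (e i j) - int (e i b) + 1)"
      if b: "b \<in> K - {j}" for b
      using hprod_step[of "lam_integrand i j b" "int (d i j) - int (d i b)"] unit jK b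
      by (simp add: H_def d_def algebra_simps)
    then show ?thesis by (simp add: lam_right_eq K_def prod.distrib)
  qed
  have column: "lam_integrand i a j (int (e i a) - int (e i j)) * (\<Prod>b\<in>K - {a}. H a b d)
      = 1 * (\<Prod>b\<in>K - {a}. H a b e)" if a: "a \<in> K - {j}" for a
  proof (rule prod_ratio_at[where x = j])
    show "lam_integrand i a j (int (e i a) - int (e i j)) * H a j d = 1 * H a j e"
      using hprod_step[of "lam_integrand i a j" "int (e i a) - int (e i j)"] unit jK a
      by (simp add: H_def d_def algebra_simps)
  qed (use a jK in \<open>auto simp: H_def d_def\<close>)
  have columns: "lam_left d * (\<Prod>a\<in>K - {j}. \<Prod>b\<in>K - {a}. H a b d)
      = (\<Prod>a\<in>K - {j}. \<Prod>b\<in>K - {a}. H a b e)"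
    using column by (simp add: lam_left_eq d_def K_def prod.distrib[symmetric] algebra_simps)
  have "lam_left d * (\<Prod>a\<in>K. \<Prod>b\<in>K - {a}. H a b d)
      = (\<Prod>b\<in>K - {j}. H j b d) * (lam_left d * (\<Prod>a\<in>K - {j}. \<Prod>b\<in>K - {a}. H a b d))"
    using jK by (simp add: prod.remove ac_simps)
  also have "\<dots> = lam_right e * (\<Prod>a\<in>K. \<Prod>b\<in>K - {a}. H a b e)"
    using jK by (simp add: row columns prod.remove ac_simps)
  finally show ?thesis by (simp add: lam_level_def H_def K_def d_def)
qed

lemma lam_factor_inc:
  "lam_left (inc_exp i j e) * lam_factor (inc_exp i j e) = lam_right e * lam_factor e"
  unfolding lam_factor_def
  by (rule prod_ratio_at[where x = i]) (use i_range lam_level_inc in \<open>simp_all add: lam_level_def\<close>)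

lemma flag_level_inc:
  assumes "valid_exp s k e"
  shows "flag_left (inc_exp i j e) * flag_level i (inc_exp i j e) = flag_level i e"
proof -
  define d where "d = inc_exp i j e"
  define B where "B = {1..kext k s n (Suc i)}"
  define G where "G a b x = hprod_recip (flag_integrand i a b) (int (x i a) - int (x (Suc i) b))"
    for a b x
  have "flag_integrand i j b (int (d i j) - int (d (Suc i) b)) * G j b d = G j b e"
    if "b \<in> B" for b
    using hprod_recip_step[of "flag_integrand i j b" "int (d i j) - int (d (Suc i) b)"]
      flag_integrand_unit[OF i_range j_range that[unfolded B_def]]
    by (simp add: G_def d_def algebra_simps)
  then have "flag_left d * (\<Prod>b\<in>B. G j b d) = 1 * (\<Prod>b\<in>B. G j b e)"
    using assms by (simp add: valid_exp_inc flag_left_eq d_def B_def G_def prod.distrib[symmetric])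
  then have "flag_left d * (\<Prod>a\<in>{1..k i}. \<Prod>b\<in>B. G a b d) = 1 * (\<Prod>a\<in>{1..k i}. \<Prod>b\<in>B. G a b e)"
    by (rule prod_ratio_at[where x = j, rotated 3]) (use j_range in \<open>auto simp: G_def d_def\<close>)
  then show ?thesis by (simp add: flag_level_def B_def G_def d_def)
qed

lemma flag_level_below_inc:
  assumes "2 \<le> i"
  shows "flag_level (i - 1) (inc_exp i j e) = flag_right e * flag_level (i - 1) e"
proof -
  define G where "G a b x = hprod_recip (flag_integrand (i - 1) a b) (int (x (i - 1) a) - int (x i b))"
    for a b x
  have i1: "i - 1 \<in> {1..s}" "Suc (i - 1) = i" "i - 1 \<noteq> i" using assms i_range by auto
  have kext: "kext k s n i = k i" "kext k s n (i - 1) = k (i - 1)"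
    using i1 i_range by (auto simp: kext_def)
  have "1 * (\<Prod>b\<in>{1..k i}. G a b (inc_exp i j e))
      = flag_integrand (i - 1) a j (int (e (i - 1) a) - int (e i j)) * (\<Prod>b\<in>{1..k i}. G a b e)"
    if a: "a \<in> {1..k (i - 1)}" for a
  proof (rule prod_ratio_at[where x = j])
    show "1 * G a j (inc_exp i j e) = flag_integrand (i - 1) a j (int (e (i - 1) a) - int (e i j)) * G a j e"
      using hprod_recip_step[of "flag_integrand (i - 1) a j" "int (e (i - 1) a) - int (e i j)"]
        flag_integrand_unit[OF i1(1) a] i1 j_range kext
      by (simp add: G_def algebra_simps)
  qed (use j_range i1 in \<open>auto simp: G_def\<close>)
  then show ?thesis
    using i1 kext by (simp add: flag_level_def G_def flag_right_eq prod.distrib[symmetric])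
qed

lemma flag_factor_inc:
  assumes valid: "valid_exp s k e"
  shows "flag_left (inc_exp i j e) * flag_factor (inc_exp i j e) = flag_right e * flag_factor e"
proof -
  define d where "d = inc_exp i j e"
  have "(if i' = i then flag_left d else 1) * flag_level i' d
      = (if i' = i - 1 then flag_right e else 1) * flag_level i' e" if i': "i' \<in> {1..s}" for i'
  proof -
    consider "i' = i" | "i' = i - 1" "2 \<le> i" | "i' \<noteq> i" "Suc i' \<noteq> i" using i' by force
    then show ?thesis
    proof cases
      case 1
      with flag_level_inc[OF valid] i_range show ?thesis by (auto simp: d_def)
    next
      case 2
      with flag_level_below_inc show ?thesis by (auto simp: d_def)
    next
      case 3
      with i' show ?thesis by (auto simp: flag_level_def d_def)
    qed
  qed
  then have "(\<Prod>i'\<in>{1..s}. (if i' = i then flag_left d else 1) * flag_level i' d)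
      = (\<Prod>i'\<in>{1..s}. (if i' = i - 1 then flag_right e else 1) * flag_level i' e)"
    by (rule prod.cong[OF refl])
  moreover have "(\<Prod>i'\<in>{1..s}. if i' = i then flag_left d else 1) = flag_left d"
    using i_range by simp
  moreover have "(\<Prod>i'\<in>{1..s}. if i' = i - 1 then flag_right e else 1) = flag_right e"
    unfolding flag_right_def using i_range by (cases "i = 1") (auto simp: kext_def)
  ultimately show ?thesis by (simp add: flag_factor_def prod.distrib d_def)
qed

lemma flag_factor_vanish:
  assumes valid: "valid_exp s k d" and zero: "d i j = 0"
  shows "flag_left d * flag_factor d = 0"
proof -
  define B where "B = {1..kext k s n (Suc i)}"
  define G where "G b = hprod_recip (flag_integrand i j b) (int (d i j) - int (d (Suc i) b))" for b
  have "flag_integrand i j b 0 dvd flag_integrand i j b (int (d i j) - int (d (Suc i) b)) * G b"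
    if "b \<in> B" for b
  proof -
    have "int (d i j) - int (d (Suc i) b) - 1 < 0" using zero by simp
    from dvd_hprod_recip_neg[OF this, of "flag_integrand i j b"]
    show ?thesis
      using hprod_recip_step[of "flag_integrand i j b" "int (d i j) - int (d (Suc i) b)",
          OF flag_integrand_unit[OF i_range j_range]] that
      by (simp add: G_def B_def mult.commute)
  qed
  then have "(\<Prod>b\<in>B. flag_integrand i j b 0)
      dvd (\<Prod>b\<in>B. flag_integrand i j b (int (d i j) - int (d (Suc i) b)) * G b)"
    by (rule prod_dvd_prod)
  also have "\<dots> = flag_left d * (\<Prod>b\<in>B. G b)"
    using valid by (simp add: flag_left_eq B_def prod.distrib)
  finally have "(\<Prod>b\<in>B. flag_integrand i j b 0) dvd flag_left d * (\<Prod>b\<in>B. G b)" .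
  moreover have "(\<Prod>b\<in>B. flag_integrand i j b 0) = 0"
    using flag_relation[OF i_range j_range] by (simp add: B_def flag_integrand_def zpow_def)
  moreover have "(\<Prod>b\<in>B. G b) dvd flag_factor d"
    unfolding flag_factor_def flag_level_def B_def G_def
    using i_range j_range by (meson dvd_prodI dvd_trans finite_atLeastAtMost)
  ultimately show ?thesis by (metis dvd_0_left mult_dvd_mono dvd_refl)
qed

lemma Ihat_inc:
  "lam_left (inc_exp i j e) * (flag_left (inc_exp i j e) * Ihat s k n ell P Lam tau lam (inc_exp i j e))
    = zpow (Dop_coeff s P Lam tau i j e) (ell i)
      * (flag_right e * (lam_right e * Ihat s k n ell P Lam tau lam e))"
proof (cases "valid_exp s k e")
  case True
  define d where "d = inc_exp i j e"
  have "lam_left d * (flag_left d * Ihat s k n ell P Lam tau lam d)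
      = (1 - tau) * twist_factor d * (lam_left d * lam_factor d) * (flag_left d * flag_factor d)"
    using True by (simp add: Ihat_eq d_def valid_exp_inc ac_simps)
  also have "\<dots> = (1 - tau) * (zpow (Dop_coeff s P Lam tau i j e) (ell i) * twist_factor e)
      * (lam_right e * lam_factor e) * (flag_right e * flag_factor e)"
    unfolding d_def twist_factor_inc lam_factor_inc flag_factor_inc[OF True] ..
  also have "\<dots> = zpow (Dop_coeff s P Lam tau i j e) (ell i)
      * (flag_right e * (lam_right e * Ihat s k n ell P Lam tau lam e))"
    using True by (simp add: Ihat_eq ac_simps)
  finally show ?thesis unfolding d_def .
qed (simp add: Ihat_eq valid_exp_inc)

lemma Ihat_vanish: "d i j = 0 \<Longrightarrow> flag_left d * Ihat s k n ell P Lam tau lam d = 0"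
  using flag_factor_vanish[of d] by (simp add: Ihat_eq ac_simps)

end

theorem mainTheorem6:
  fixes s n :: nat and k :: "nat \<Rightarrow> nat" and ell :: "nat \<Rightarrow> int"
    and P :: "nat \<Rightarrow> nat \<Rightarrow> 'a::comm_ring_1" and Lam :: "nat \<Rightarrow> 'a"
    and tau lam :: 'a and i j :: nat
  assumes k_pos: "0 < k 1"
    and k_mono: "\<forall>i'. 1 \<le> i' \<and> i' < s \<longrightarrow> k i' < k (Suc i')"
    and k_lt_n: "k s < n"
    and tau_unit: "tau dvd 1"
    and P_unit: "\<forall>i' a. 1 \<le> i' \<and> i' \<le> s \<and> 1 \<le> a \<and> a \<le> k i' \<longrightarrow> P i' a dvd 1"
    and Lam_unit: "\<forall>b. 1 \<le> b \<and> b \<le> n \<longrightarrow> Lam b dvd 1"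
    and lam_unit: "\<forall>i' a b (l::int). 1 \<le> i' \<and> i' \<le> s \<and> a \<in> {1..k i'} \<and> b \<in> {1..k i'} \<and> a \<noteq> b
        \<longrightarrow> (1 - lam * P i' a * rinv (P i' b) * zpow tau l) dvd 1"
    and P_den_unit: "\<forall>i' a b (l::nat). 1 \<le> i' \<and> i' < s \<and> a \<in> {1..k i'} \<and> b \<in> {1..k (Suc i')} \<and> 1 \<le> l
        \<longrightarrow> (1 - P i' a * rinv (P (Suc i') b) * tau ^ l) dvd 1"
    and Lam_den_unit: "\<forall>a b (l::nat). a \<in> {1..k s} \<and> b \<in> {1..n} \<and> 1 \<le> l
        \<longrightarrow> (1 - P s a * rinv (Lam b) * tau ^ l) dvd 1"
    and rel: "\<forall>i' a. 1 \<le> i' \<and> i' \<le> s \<and> a \<in> {1..k i'} \<longrightarrow>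
        (\<Prod>b\<in>{1..kext k s n (Suc i')}. 1 - P i' a * rinv (Pext P Lam s (Suc i') b)) = 0"
    and i_range: "1 \<le> i" "i \<le> s"
    and j_range: "1 \<le> j" "j \<le> k i"
  shows
   "op_prod ({1..k i} - {j}) (\<lambda>c. one_minus_ratio s P Lam tau (tau * lam) i c i j)
      (op_prod {1..kext k s n (Suc i)} (\<lambda>c. one_minus_ratio s P Lam tau 1 i j (Suc i) c)
        (Ihat s k n ell P Lam tau lam))
    = mulq i j (Dop_pow s P Lam tau i j (ell i)
        (op_prod {1..kext k s n (i - 1)} (\<lambda>c. one_minus_ratio s P Lam tau 1 (i - 1) c i j)
          (op_prod ({1..k i} - {j}) (\<lambda>c. one_minus_ratio s P Lam tau (tau * lam) i j i c)
            (Ihat s k n ell P Lam tau lam))))"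
proof -
  have flag_unit: "(1 - P i' a * rinv (Pext P Lam s (Suc i') b) * zpow tau l) dvd 1"
    if "i' \<in> {1..s}" "a \<in> {1..k i'}" "b \<in> {1..kext k s n (Suc i')}" "1 \<le> l" for i' a b l
  proof -
    have "zpow tau l = tau ^ nat l" using that(4) by (simp add: zpow_def)
    then show ?thesis
      using that P_den_unit Lam_den_unit by (cases "i' = s") (auto simp: kext_def Pext_def)
  qed
  interpret abelian_Ihat_entry s n k ell P Lam tau lam i j
    using tau_unit P_unit lam_unit flag_unit rel i_range j_range by unfold_locales auto
  define dec where "dec d = d(i := (d i)(j := d i j - 1))" for d :: "nat \<Rightarrow> nat \<Rightarrow> nat"
  have coeff: "lam_left d * (flag_left d * Ihat s k n ell P Lam tau lam d)
      = (if 1 \<le> d i j then zpow (Dop_coeff s P Lam tau i j (dec d)) (ell i)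
          * (flag_right (dec d) * (lam_right (dec d) * Ihat s k n ell P Lam tau lam (dec d)))
         else 0)" for d
  proof (cases "d i j = 0")
    case False
    then have "inc_exp i j (dec d) = d" by (auto simp: inc_exp_def dec_def fun_eq_iff)
    with False show ?thesis using Ihat_inc[of "dec d"] by simp
  qed (simp add: Ihat_vanish)
  have "Dop_pow s P Lam tau i j (ell i) f = (\<lambda>d. zpow (Dop_coeff s P Lam tau i j d) (ell i) * f d)"
    for f using i_ne_Suc_s P_unit i_range j_range tau_unit by (intro Dop_pow_eq) auto
  then show ?thesis
    using coeff by (simp add: one_minus_ratio_eq op_prod_mult mulq_def fun_eq_iff dec_def
        lam_left_def lam_right_def flag_left_def flag_right_def)
qed

end
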